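(* Let $\mu>1$ be a real number, $N\ge 1$ an integer, and $f:\mathbb{N}\to\mathbb{R}$ a non-negative, non-decreasing function with $\sum_{n=1}^\infty f(n)/n^2<\infty$. Let $a(1),a(2),\dots$ be a sequence of real numbers such that $$a(n+m)\le a(n)+a(m)+f(n+m)$$ holds for all integers $n,m$ with $N\le n\le m\le \mu n$. Then $\lim_{n\to\infty} a(n)/n$ exists (possibly $-\infty$). *)

theory Defs
  imports Complex_Main "HOL-Library.Extended_Real"
begin

end

theory Submission
  imports Defs
begin

text \<open>
  Upper bound: splitting m into two almost equal halves gives
  a(m)/m \<le> max of the two ratios + f(m)/m, and these errors are summable over dyadic blocks
  because \<Sum> f(n)/n^2 < \<infinity>; hence lim sup a(n)/n < \<infinity>.

  Lower bound: let \<lambda> be the (finite) lim sup and a(M) \<ge> (\<lambda> - \<epsilon>)M for some huge M.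
  Writing x = n + (x - n) with 2n \<le> x \<le> (1 + \<mu>)n and using a(x - n) \<le> (\<lambda> + \<epsilon>)(x - n),
  near-optimality of a(x) is inherited by a(n) at the cost of a bounded factor; after a fixed number J
  of such steps every point of the window [M/\<beta>^J, M/2^J], \<beta> = (3 + \<mu>)/2, is reached.
  Doubling any large k lands in that window and costs only a tail of \<Sum> f(n)/n^2, hence
  a(k)/k \<ge> \<lambda> - \<eta> for all large k and the lim inf equals the lim sup.
\<close>

lemma dyadic_bracket:
  fixes c m :: nat
  assumes "1 \<le> c" "c \<le> m"
  obtains i where "c * 2^i \<le> m" "m < c * 2^Suc i"
proof -
  have "\<exists>i. c * 2^i \<le> m \<and> m < c * 2^Suc i"
    using assms(2)
  proof (induction m rule: less_induct)
    case (less m)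
    show ?case
    proof (cases "m < 2*c")
      case True
      then show ?thesis using less by (intro exI[of _ 0]) auto
    next
      case False
      then have "c \<le> m div 2" "m div 2 < m" using assms by auto
      then obtain i where "c*2^i \<le> m div 2" "m div 2 < c*2^Suc i" using less by blast
      then have "c*2^Suc i \<le> m" "m < c*2^Suc (Suc i)" by auto
      then show ?thesis by blast
    qed
  qed
  then show ?thesis using that by blast
qed

locale slowly_growing =
  fixes f :: "nat \<Rightarrow> real"
  assumes f_nonneg: "\<And>n. 1 \<le> n \<Longrightarrow> 0 \<le> f n"
    and f_mono: "\<And>n m. 1 \<le> n \<Longrightarrow> n \<le> m \<Longrightarrow> f n \<le> f m"
    and f_summable: "summable (\<lambda>n. f (Suc n) / (real (Suc n))^2)"
begin

definition w :: "nat \<Rightarrow> real" where "w n = f n / (real n)^2"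

lemma summable_w: "summable w"
  using f_summable summable_Suc_iff[of w] by (simp add: w_def)

lemma w_nonneg: "0 \<le> w n"
  by (cases "n = 0") (auto simp: w_def f_nonneg)

lemma f_div_le_block:
  assumes "1 \<le> x"
  shows "f x / x \<le> 4 * (\<Sum>n\<in>{x..<2*x}. w n)"
proof -
  have "f x / (4 * (real x)^2) \<le> w n" if n: "n \<in> {x..<2*x}" for n
  proof -
    have fx: "0 \<le> f x" "f x \<le> f n" using f_nonneg f_mono assms n by auto
    have "real n ^2 \<le> (2 * real x)^2" using n by (intro power_mono) auto
    then have "real n ^2 \<le> 4 * (real x)^2" by (simp add: power_mult_distrib)
    moreover have "0 < real n ^2" using n assms by auto
    ultimately have "f x / (4 * (real x)^2) \<le> f x / (real n)^2"
      using fx assms by (intro divide_left_mono) auto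
    also have "\<dots> \<le> f n / (real n)^2" using fx by (intro divide_right_mono) auto
    finally show ?thesis by (simp add: w_def)
  qed
  then have "(\<Sum>n\<in>{x..<2*x}. f x / (4 * (real x)^2)) \<le> (\<Sum>n\<in>{x..<2*x}. w n)"
    by (rule sum_mono)
  moreover have "(\<Sum>n\<in>{x..<2*x}. f x / (4 * (real x)^2)) = f x / (4 * x)"
    using assms by (simp add: power2_eq_square)
  ultimately show ?thesis by simp
qed

lemma f_div_le_block_above:
  assumes "1 \<le> m" "m \<le> Y" "Y \<le> 2*m"
  shows "f m / m \<le> 8 * (\<Sum>n\<in>{Y..<2*Y}. w n)"
proof -
  have "f m \<le> f Y" "0 \<le> f Y" using f_mono f_nonneg assms by auto
  moreover have "real Y \<le> 2 * real m" "1 \<le> real m" using assms by linarith+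
  ultimately have "f m / m \<le> f Y / (Y / 2)"
    using assms by (intro frac_le) auto
  also have "\<dots> = 2 * (f Y / Y)" by simp
  also have "\<dots> \<le> 8 * (\<Sum>n\<in>{Y..<2*Y}. w n)" using f_div_le_block[of Y] assms by simp
  finally show ?thesis .
qed

lemma w_tail_le:
  fixes \<eta> :: real
  assumes "0 < \<eta>"
  obtains K where "\<And>k m. K \<le> k \<Longrightarrow> (\<Sum>n\<in>{k..<m}. w n) \<le> \<eta>"
proof -
  obtain K where K: "\<And>n. K \<le> n \<Longrightarrow> norm (\<Sum>i. w (i + n)) < \<eta>"
    using suminf_exist_split[OF assms summable_w] by blast
  have "(\<Sum>n\<in>{k..<m}. w n) \<le> \<eta>" if "K \<le> k" for k m
  proof -
    have "(\<Sum>n\<in>{k..<m}. w n) = (\<Sum>i\<in>{0..<m-k}. w (i + k))"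
    proof (cases "k \<le> m")
      case True
      then show ?thesis using sum.shift_bounds_nat_ivl[of w 0 k "m-k"] by (simp add: add.commute)
    qed auto
    also have "\<dots> \<le> (\<Sum>i. w (i + k))"
      by (rule sum_le_suminf) (auto intro: summable_ignore_initial_segment summable_w w_nonneg)
    also have "\<dots> \<le> \<eta>" using K[OF that] by simp
    finally show ?thesis .
  qed
  then show ?thesis using that by blast
qed

lemma f_le_eventually:
  fixes \<eta> :: real
  assumes "0 < \<eta>"
  obtains K where "\<And>x. K \<le> x \<Longrightarrow> f x \<le> \<eta> * x"
proof -
  obtain K where K: "\<And>k m. K \<le> k \<Longrightarrow> (\<Sum>n\<in>{k..<m}. w n) \<le> \<eta>/4"
    using w_tail_le[of "\<eta>/4"] assms by auto
  have "f x \<le> \<eta> * x" if "max 1 K \<le> x" for x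
  proof -
    have "f x / x \<le> \<eta>" using f_div_le_block[of x] K[of x "2*x"] that by auto
    then show ?thesis using that by (simp add: field_simps)
  qed
  then show ?thesis using that by blast
qed

end

text \<open>\<open>\<epsilon> * descent_factor \<mu> j\<close> bounds the loss in the lower bound after j descent steps:
  each step multiplies it by x/n \<le> 1 + \<mu> and adds 2\<epsilon> (from a(x - n) and f(x)).\<close>

primrec descent_factor :: "real \<Rightarrow> nat \<Rightarrow> real" where
  "descent_factor \<mu> 0 = 1"
| "descent_factor \<mu> (Suc j) = (1 + \<mu>) * (descent_factor \<mu> j + 2)"

lemma descent_factor_ge_1:
  assumes "1 < \<mu>"
  shows "1 \<le> descent_factor \<mu> j"
proof (induction j)
  case (Suc j)
  then show ?case
    using assms mult_nonneg_nonneg[of \<mu> "descent_factor \<mu> j + 2"] by (simp add: algebra_simps)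
qed simp

lemma descent_point:
  fixes \<mu> R :: real and M n j :: nat
  defines "\<beta> \<equiv> (3 + \<mu>) / 2"
  assumes \<mu>: "1 < \<mu>" and R: "4 / (\<mu> - 1) \<le> R" "R \<le> real n" "R \<le> M / \<beta>^j"
    and n: "M / \<beta>^Suc j \<le> real n" "real n \<le> M / 2^Suc j"
  obtains x :: nat where "2*n \<le> x" "real x \<le> (1 + \<mu>) * n" "M / \<beta>^j \<le> real x" "real x \<le> M / 2^j"
proof -
  define t where "t = M / \<beta>^j"
  define A where "A = (1 + \<mu>) * real n"
  define B where "B = M / 2^j"
  have \<beta>: "2 < \<beta>" using \<mu> unfolding \<beta>_def by simp
  have R4: "4 \<le> R * (\<mu> - 1)" using R(1) \<mu> by (simp add: field_simps)
  have "t \<le> \<beta> * real n"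
    using n(1) \<beta> unfolding t_def by (simp add: field_simps)
  moreover have "A - \<beta> * real n = (\<mu> - 1) / 2 * real n" unfolding A_def \<beta>_def by (simp add: algebra_simps)
  moreover have "(\<mu> - 1) / 2 * R \<le> (\<mu> - 1) / 2 * real n" using R(2) \<mu> by (intro mult_left_mono) auto
  moreover have "(\<mu> - 1) / 2 * R = R * (\<mu> - 1) / 2" by simp
  ultimately have At: "t + 1 \<le> A" using R4 by linarith
  have Bt: "t + 1 \<le> B" if "j \<noteq> 0"
  proof -
    have "t \<ge> R" using R(3) unfolding t_def .
    moreover have "0 < 4 / (\<mu> - 1)" using \<mu> by simp
    ultimately have "0 \<le> t" using R(1) by linarith
    have "(\<beta>/2)^1 \<le> (\<beta>/2)^j" using that \<beta> by (intro power_increasing) auto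
    have "1 \<le> R * ((\<mu> - 1) / 4)" using R4 by simp
    moreover have "R * ((\<mu> - 1) / 4) \<le> t * ((\<mu> - 1) / 4)" using \<open>t \<ge> R\<close> \<mu> by (intro mult_right_mono) auto
    moreover have "\<beta>/2 = 1 + (\<mu> - 1) / 4" unfolding \<beta>_def by (simp add: divide_simps)
    then have "t * (\<beta>/2) = t + t * ((\<mu> - 1) / 4)" by (simp add: distrib_left)
    moreover have "t * (\<beta>/2) \<le> t * (\<beta>/2)^j"
      using \<open>(\<beta>/2)^1 \<le> (\<beta>/2)^j\<close> \<open>0 \<le> t\<close> by (intro mult_left_mono) auto
    moreover have "B = t * (\<beta>/2)^j" unfolding B_def t_def using \<beta> by (simp add: power_divide)
    ultimately show ?thesis by linarith
  qed
  have "2 * real n \<le> B" using n(2) unfolding B_def by (simp add: field_simps)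
  moreover have "2 * real n \<le> A"
    using \<mu> mult_right_mono[of 1 \<mu> "real n"] unfolding A_def by (simp add: algebra_simps)
  ultimately have n2: "2 * real n \<le> min A B" by simp
  define x where "x = nat \<lfloor>min A B\<rfloor>"
  have rx: "real x = real_of_int \<lfloor>min A B\<rfloor>" unfolding x_def using n2 by simp
  have "real x \<le> A" "real x \<le> B" using rx by (metis min.bounded_iff of_int_floor_le)+
  moreover have "2 * n \<le> x" using n2 unfolding x_def by linarith
  moreover have "t \<le> real x"
  proof (cases "j = 0")
    case True
    then have "min A B = real M" using At unfolding B_def t_def by simp
    then show ?thesis using rx True unfolding t_def by simp
  next
    case False
    then show ?thesis using rx At Bt by linarith
  qed
  ultimately show ?thesis using that unfolding A_def B_def t_def by simp
qed

lemma doubling_hits_window: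
  fixes \<beta> :: real and k M J :: nat
  assumes k: "1 \<le> k" "2^J * k \<le> M" and \<beta>: "2 < (\<beta>/2)^J"
  obtains i where "M / \<beta>^J \<le> real (k * 2^i)" "real (k * 2^i) \<le> M / 2^J"
proof -
  define q where "q = M div 2^J"
  have "(2^J * k) div 2^J \<le> q" unfolding q_def using k(2) by (rule div_le_mono)
  then have "k \<le> q" by simp
  then obtain i where i: "k*2^i \<le> q" "q < k*2^Suc i" using dyadic_bracket[OF k(1)] by blast
  define y where "y = k*2^i"
  have "q * 2^J + M mod 2^J = M" "M mod 2^J < 2^J" "(q + 1) * 2^J = q * 2^J + 2^J"
    unfolding q_def by (simp_all add: div_mult_mod_eq)
  then have qM: "q * 2^J \<le> M" "M < (q + 1) * 2^J" by linarith+
  have "y * 2^J \<le> M" using mult_le_mono1[OF i(1), of "2^J"] qM(1) unfolding y_def by linarith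
  then have "real (y * 2^J) \<le> real M" by (simp only: of_nat_le_iff)
  then have "real y * 2^J \<le> M" by simp
  then have upper: "real y \<le> M / 2^J" by (simp add: field_simps)
  have "(q + 1) * 2^J \<le> 2 * y * 2^J" using i(2) unfolding y_def by (intro mult_le_mono1) simp
  then have "M < 2 * y * 2^J" using qM(2) by linarith
  then have "real M < real (2 * y * 2^J)" by (simp only: of_nat_less_iff)
  then have "real M < 2 * real y * 2^J" by simp
  then have "M / 2^J < 2 * real y" by (simp add: field_simps)
  have "M / \<beta>^J = (M / 2^J) / (\<beta>/2)^J" by (simp add: power_divide)
  also have "\<dots> \<le> (M / 2^J) / 2" using \<beta> by (intro divide_left_mono) auto
  also have "\<dots> \<le> real y" using \<open>M / 2^J < 2 * real y\<close> by simp
  finally have "M / \<beta>^J \<le> real y" .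
  then show ?thesis using that upper unfolding y_def by blast
qed

locale near_subadditive = slowly_growing f
  for f :: "nat \<Rightarrow> real" +
  fixes \<mu> :: real and N :: nat and a :: "nat \<Rightarrow> real"
  assumes mu_gt_1: "1 < \<mu>" and N_ge_1: "1 \<le> N"
    and near_subadd: "\<And>n m. N \<le> n \<Longrightarrow> n \<le> m \<Longrightarrow> real m \<le> \<mu> * real n \<Longrightarrow>
           a (n + m) \<le> a n + a m + f (n + m)"
begin

lemma ratio_double:
  assumes "N \<le> y"
  shows "a (2*y) / (2*y) \<le> a y / y + 4 * (\<Sum>n\<in>{2*y..<2*(2*y)}. w n)"
proof -
  have y: "1 \<le> y" using assms N_ge_1 by simp
  have "1 * real y \<le> \<mu> * real y" using mu_gt_1 by (intro mult_right_mono) auto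
  then have "a (y + y) \<le> a y + a y + f (y + y)"
    using near_subadd[OF assms, of y] by simp
  then have "a (2*y) \<le> 2 * a y + f (2*y)" by (metis mult_2)
  then have "a (2*y) / (2*y) \<le> (2 * a y + f (2*y)) / (2*y)"
    by (rule divide_right_mono) simp
  also have "\<dots> = a y / y + f (2*y) / (2*y)"
    using y by (simp add: add_divide_distrib)
  finally have "a (2*y) / (2*y) \<le> a y / y + f (2*y) / (2*y)" .
  moreover have "f (2*y) / (2*y) \<le> 4 * (\<Sum>n\<in>{2*y..<2*(2*y)}. w n)"
    using f_div_le_block[of "2*y"] y by simp
  ultimately show ?thesis by simp
qed

lemma ratio_double_iter:
  assumes "N \<le> k"
  shows "a (k*2^i) / (k*2^i) \<le> a k / k + 4 * (\<Sum>n\<in>{2*k..<2*k*2^i}. w n)"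
proof (induction i)
  case (Suc i)
  have "k*1 \<le> k*2^i" by (intro mult_le_mono2) simp
  then have "N \<le> k*2^i" using assms by linarith
  then have "a (k*2^Suc i) / (k*2^Suc i) \<le> a (k*2^i) / (k*2^i) + 4 * (\<Sum>n\<in>{2*k*2^i..<2*k*2^Suc i}. w n)"
    using ratio_double[of "k*2^i"] by (simp add: mult.assoc mult.left_commute)
  also have "\<dots> \<le> a k / k + 4 * ((\<Sum>n\<in>{2*k..<2*k*2^i}. w n) + (\<Sum>n\<in>{2*k*2^i..<2*k*2^Suc i}. w n))"
    using Suc by simp
  also have "(\<Sum>n\<in>{2*k..<2*k*2^i}. w n) + (\<Sum>n\<in>{2*k*2^i..<2*k*2^Suc i}. w n) = (\<Sum>n\<in>{2*k..<2*k*2^Suc i}. w n)"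
    by (rule sum.atLeastLessThan_concat) simp_all
  finally show ?case .
qed simp

lemma ratio_halving_step:
  assumes c: "N \<le> c" "1 \<le> (\<mu> - 1) * c" and m: "2 * c \<le> m"
    and B: "a (m div 2) \<le> B * real (m div 2)" "a (m - m div 2) \<le> B * real (m - m div 2)"
  shows "a m / m \<le> B + f m / m"
proof -
  define p q where "p = m div 2" and "q = m - m div 2"
  have pq: "c \<le> p" "p \<le> q" "q \<le> p + 1" "p + q = m" using m unfolding p_def q_def by linarith+
  have "(\<mu> - 1) * c \<le> (\<mu> - 1) * p" using pq mu_gt_1 by (intro mult_left_mono) auto
  then have "real q \<le> \<mu> * real p" using pq c by (simp add: algebra_simps)
  then have "a m \<le> a p + a q + f m" using near_subadd[of p q] c pq by simp
  also have "\<dots> \<le> B * m + f m"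
  proof -
    have "B * p + B * q = B * m" using pq(4) by (metis distrib_left of_nat_add)
    then show ?thesis using B unfolding p_def q_def by linarith
  qed
  finally have "a m \<le> B * m + f m" .
  moreover have "0 < real m" using c m N_ge_1 by simp
  ultimately show ?thesis by (simp add: field_simps)
qed

lemma ratio_bound_on_dyadic_blocks:
  assumes c: "N \<le> c" "1 \<le> (\<mu> - 1) * c"
    and B0: "\<And>m. c \<le> m \<Longrightarrow> m \<le> 2*c \<Longrightarrow> a m / m \<le> B0"
  shows "c*2^i \<le> m \<Longrightarrow> m \<le> c*2^Suc i \<Longrightarrow> a m / m \<le> B0 + 8 * (\<Sum>n\<in>{4*c..<c*2^(i+2)}. w n)"
proof (induction i arbitrary: m)
  case (Suc i)
  define B where "B = B0 + 8 * (\<Sum>n\<in>{4*c..<c*2^(i+2)}. w n)"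
  define Y where "Y = c*2^(i+2)"
  have "c*1 \<le> c*2^i" by (intro mult_le_mono2) simp
  moreover have "2*(c*2^i) \<le> m" "m \<le> 2*(c*2^Suc i)" "c*2^Suc i = 2*(c*2^i)"
    using Suc.prems by simp_all
  ultimately have block: "c \<le> c*2^i" "2*(c*2^i) \<le> m" "m \<le> 2*(c*2^Suc i)" "c*2^Suc i = 2*(c*2^i)"
    by simp_all
  then have m: "2*c \<le> m" by linarith
  have "a h \<le> B * h" if "h = m div 2 \<or> h = m - m div 2" for h
  proof -
    have "c*2^i \<le> h" "h \<le> c*2^Suc i" "0 < h" using that block c(1) N_ge_1 by linarith+
    then show ?thesis using Suc.IH[of h] unfolding B_def by (simp add: pos_divide_le_eq)
  qed
  then have "a m / m \<le> B + f m / m"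
    using ratio_halving_step[OF c m] by blast
  also have "f m / m \<le> 8 * (\<Sum>n\<in>{Y..<2*Y}. w n)"
    using f_div_le_block_above[of m Y] m Suc.prems c N_ge_1 unfolding Y_def by simp
  also have "B + 8 * (\<Sum>n\<in>{Y..<2*Y}. w n) = B0 + 8 * (\<Sum>n\<in>{4*c..<2*Y}. w n)"
    using sum.atLeastLessThan_concat[of "4*c" Y "2*Y" w] unfolding B_def Y_def
    by (simp add: distrib_left)
  also have "2*Y = c*2^(Suc i+2)" unfolding Y_def by simp
  finally show ?case by simp
qed (use B0 in simp)

lemma ratio_bounded_above: "\<exists>B. \<forall>\<^sub>F m in sequentially. a m / m \<le> B"
proof -
  define c where "c = max N (nat \<lceil>1/(\<mu>-1)\<rceil>)"
  have c: "N \<le> c" "1 \<le> c" "1 \<le> (\<mu> - 1) * c"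
  proof -
    have "1/(\<mu>-1) \<le> c" unfolding c_def by linarith
    then show "1 \<le> (\<mu> - 1) * c" using mu_gt_1 by (simp add: field_simps)
  qed (use N_ge_1 in \<open>auto simp: c_def\<close>)
  define B0 where "B0 = Max ((\<lambda>m. a m / m) ` {c..2*c})"
  have B0: "a m / m \<le> B0" if "c \<le> m" "m \<le> 2*c" for m
    unfolding B0_def using that by (intro Max_ge) auto
  have "a m / m \<le> B0 + 8 * suminf w" if m: "c \<le> m" for m
  proof -
    obtain i where i: "c*2^i \<le> m" "m < c*2^Suc i" using dyadic_bracket[OF c(2) m] by blast
    have "(\<Sum>n\<in>{4*c..<c*2^(i+2)}. w n) \<le> suminf w"
      by (rule sum_le_suminf) (auto intro: summable_w w_nonneg)
    then show ?thesis using ratio_bound_on_dyadic_blocks[OF c(1,3) B0 i(1)] i(2) by simp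
  qed
  then show ?thesis unfolding eventually_sequentially by blast
qed

lemma lower_bound_step:
  fixes lam \<epsilon> e :: real
  assumes K1: "\<And>m. K1 \<le> m \<Longrightarrow> a m \<le> (lam + \<epsilon>) * m"
    and K2: "\<And>x. K2 \<le> x \<Longrightarrow> f x \<le> \<epsilon> * x"
    and ax: "(lam - e) * x \<le> a x" and e: "0 \<le> e" "0 \<le> \<epsilon>"
    and x: "2*n \<le> x" "real x \<le> (1 + \<mu>) * n" and n: "N \<le> n" "K1 \<le> n" "K2 \<le> x"
  shows "(lam - (1 + \<mu>) * (e + 2*\<epsilon>)) * n \<le> a n"
proof -
  define m where "m = x - n"
  have m: "n \<le> m" "n + m = x" "real m = real x - real n" using x unfolding m_def by auto
  then have "real m \<le> \<mu> * real n" using x by (simp add: algebra_simps)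
  then have "a x \<le> a n + a m + f x" using near_subadd[OF n(1) m(1)] m by simp
  moreover have "a m \<le> (lam + \<epsilon>) * m" using m(1) n(2) by (intro K1) linarith
  moreover have "f x \<le> \<epsilon> * x" using K2 n by simp
  moreover have "\<epsilon> * real m \<le> \<epsilon> * x" using e m by (simp add: mult_left_mono)
  moreover have "(e + 2*\<epsilon>) * real x \<le> (e + 2*\<epsilon>) * ((1 + \<mu>) * n)"
    using x e by (intro mult_left_mono) auto
  moreover have "(lam + \<epsilon>) * real m = lam * real x - lam * real n + \<epsilon> * real m"
    unfolding m(3) by (simp add: algebra_simps)
  moreover have "(lam - (1 + \<mu>) * (e + 2*\<epsilon>)) * n = lam * n - (e + 2*\<epsilon>) * ((1 + \<mu>) * n)"
    by (simp add: algebra_simps)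
  moreover have "(lam - e) * real x = lam * x - e * x" "(e + 2*\<epsilon>) * real x = e * x + 2 * (\<epsilon> * x)"
    by (simp_all add: algebra_simps)
  ultimately show ?thesis using ax by linarith
qed

lemma lower_bound_descent:
  fixes lam \<epsilon> R :: real and M J K1 K2 :: nat
  defines "\<beta> \<equiv> (3 + \<mu>) / 2"
  assumes K1: "\<And>m. K1 \<le> m \<Longrightarrow> a m \<le> (lam + \<epsilon>) * m"
    and K2: "\<And>x. K2 \<le> x \<Longrightarrow> f x \<le> \<epsilon> * x"
    and \<epsilon>: "0 < \<epsilon>"
    and R: "N \<le> R" "K1 \<le> R" "K2 \<le> R" "4 / (\<mu> - 1) \<le> R"
    and MR: "R \<le> M / \<beta>^J"
    and aM: "(lam - \<epsilon>) * M \<le> a M"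
  shows "j \<le> J \<Longrightarrow> M / \<beta>^j \<le> real n \<Longrightarrow> real n \<le> M / 2^j
     \<Longrightarrow> (lam - \<epsilon> * descent_factor \<mu> j) * n \<le> a n"
proof (induction j arbitrary: n)
  case 0
  then show ?case using aM by simp
next
  case (Suc j)
  have \<beta>: "1 \<le> \<beta>" using mu_gt_1 unfolding \<beta>_def by simp
  have R_le: "R \<le> M / \<beta>^i" if "i \<le> J" for i
  proof -
    have "\<beta>^i \<le> \<beta>^J" using that \<beta> by (rule power_increasing)
    then have "M / \<beta>^J \<le> M / \<beta>^i" using \<beta> by (intro divide_left_mono) auto
    then show ?thesis using MR by linarith
  qed
  have "R \<le> real n" using R_le[OF Suc.prems(1)] Suc.prems(2) by linarith
  moreover have "R \<le> M / \<beta>^j" using R_le Suc.prems(1) by simp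
  ultimately obtain x where x: "2*n \<le> x" "real x \<le> (1 + \<mu>) * n" "M / \<beta>^j \<le> real x" "real x \<le> M / 2^j"
    using descent_point[OF mu_gt_1 R(4)] Suc.prems(2,3) unfolding \<beta>_def by blast
  have ax: "(lam - \<epsilon> * descent_factor \<mu> j) * x \<le> a x"
    using Suc.IH Suc.prems(1) x(3,4) by simp
  have e: "0 \<le> \<epsilon> * descent_factor \<mu> j" "0 \<le> \<epsilon>"
    using \<epsilon> descent_factor_ge_1[OF mu_gt_1, of j] by simp_all
  have n: "N \<le> n" "K1 \<le> n" "K2 \<le> x" using R \<open>R \<le> real n\<close> x(1) by linarith+
  have "(lam - (1 + \<mu>) * (\<epsilon> * descent_factor \<mu> j + 2*\<epsilon>)) * n \<le> a n"
    by (rule lower_bound_step[OF K1 K2 ax e x(1,2) n])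
  moreover have "(1 + \<mu>) * (\<epsilon> * descent_factor \<mu> j + 2*\<epsilon>) = \<epsilon> * descent_factor \<mu> (Suc j)"
    by (simp add: algebra_simps)
  ultimately show ?case by simp
qed

lemma ratio_le_above_Limsup:
  assumes lam: "Limsup sequentially (\<lambda>n. ereal (a n / n)) = ereal lam" and \<epsilon>: "0 < \<epsilon>"
  obtains K where "\<And>m. K \<le> m \<Longrightarrow> a m \<le> (lam + \<epsilon>) * m"
proof -
  have "\<forall>\<^sub>F m in sequentially. ereal (a m / m) < ereal (lam + \<epsilon>)"
    using lam \<epsilon> by (intro Limsup_lessD) simp
  then obtain K where K: "\<And>m. K \<le> m \<Longrightarrow> a m / m < lam + \<epsilon>"
    unfolding eventually_sequentially by auto
  have "a m \<le> (lam + \<epsilon>) * m" if "max K 1 \<le> m" for m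
    using K[of m] that by (simp add: divide_less_eq)
  then show ?thesis using that by blast
qed

lemma exists_ratio_ge_below_Limsup:
  assumes lam: "Limsup sequentially (\<lambda>n. ereal (a n / n)) = ereal lam" and \<epsilon>: "0 < \<epsilon>"
  shows "\<exists>M\<ge>K. (lam - \<epsilon>) * M \<le> a M"
proof (rule ccontr)
  assume "\<not> ?thesis"
  then have "ereal (a M / M) \<le> ereal (lam - \<epsilon>)" if "max K 1 \<le> M" for M
    using that by (auto simp: divide_le_eq)
  then have "\<forall>\<^sub>F M in sequentially. ereal (a M / M) \<le> ereal (lam - \<epsilon>)"
    unfolding eventually_sequentially by blast
  then have "Limsup sequentially (\<lambda>n. ereal (a n / n)) \<le> ereal (lam - \<epsilon>)"
    by (rule Limsup_bounded)
  then show False using lam \<epsilon> by simp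
qed

lemma ratio_eventually_ge:
  assumes lam: "Limsup sequentially (\<lambda>n. ereal (a n / n)) = ereal lam" and \<eta>: "0 < \<eta>"
  shows "\<forall>\<^sub>F k in sequentially. lam - \<eta> \<le> a k / k"
proof -
  define \<beta> where "\<beta> = (3 + \<mu>) / 2"
  have "1 < \<beta>/2" using mu_gt_1 unfolding \<beta>_def by simp
  then obtain J where J: "2 < (\<beta>/2)^J" using real_arch_pow by blast
  define C where "C = descent_factor \<mu> J"
  have C: "1 \<le> C" unfolding C_def by (rule descent_factor_ge_1[OF mu_gt_1])
  define \<epsilon> where "\<epsilon> = \<eta> / (2*C)"
  have \<epsilon>: "0 < \<epsilon>" "\<epsilon> * C = \<eta>/2" unfolding \<epsilon>_def using \<eta> C by simp_all
  obtain K1 where K1: "\<And>m. K1 \<le> m \<Longrightarrow> a m \<le> (lam + \<epsilon>) * m"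
    using ratio_le_above_Limsup[OF lam \<epsilon>(1)] by blast
  obtain K2 where K2: "\<And>x. K2 \<le> x \<Longrightarrow> f x \<le> \<epsilon> * x"
    using f_le_eventually[OF \<epsilon>(1)] by blast
  obtain K3 where K3: "\<And>k m. K3 \<le> k \<Longrightarrow> (\<Sum>n\<in>{k..<m}. w n) \<le> \<eta>/8"
    using w_tail_le[of "\<eta>/8"] \<eta> by auto
  define R where "R = max (real N) (max (real K1) (max (real K2) (4 / (\<mu> - 1))))"
  have R: "real N \<le> R" "real K1 \<le> R" "real K2 \<le> R" "4 / (\<mu> - 1) \<le> R" unfolding R_def by auto
  have "lam - \<eta> \<le> a k / k" if k: "max N K3 \<le> k" for k
  proof -
    obtain M where M: "max (nat \<lceil>R * \<beta>^J\<rceil>) (2^J * k) \<le> M" "(lam - \<epsilon>) * M \<le> a M"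
      using exists_ratio_ge_below_Limsup[OF lam \<epsilon>(1)] by blast
    have "0 < \<beta>" using mu_gt_1 unfolding \<beta>_def by simp
    moreover have "R * \<beta>^J \<le> M" using M(1) by linarith
    ultimately have MR: "R \<le> M / \<beta>^J" by (simp add: pos_le_divide_eq)
    have "1 \<le> k" using k N_ge_1 by simp
    then obtain i where i: "M / \<beta>^J \<le> real (k * 2^i)" "real (k * 2^i) \<le> M / 2^J"
      using doubling_hits_window[of k J M \<beta>] M(1) J by auto
    have "(lam - \<epsilon> * C) * real (k * 2^i) \<le> a (k * 2^i)"
      using lower_bound_descent[OF K1 K2 \<epsilon>(1) R _ M(2) order_refl] MR i
      unfolding C_def \<beta>_def by blast
    then have "lam - \<eta>/2 \<le> a (k * 2^i) / (k * 2^i)"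
      using \<epsilon>(2) \<open>1 \<le> k\<close> by (simp add: pos_le_divide_eq)
    moreover have "a (k * 2^i) / (k * 2^i) \<le> a k / k + 4 * (\<Sum>n\<in>{2*k..<2*k*2^i}. w n)"
      using ratio_double_iter k by simp
    moreover have "(\<Sum>n\<in>{2*k..<2*k*2^i}. w n) \<le> \<eta>/8" using K3 k by simp
    ultimately show ?thesis by linarith
  qed
  then show ?thesis unfolding eventually_sequentially by blast
qed

lemma Limsup_ratio_ne_top: "Limsup sequentially (\<lambda>n. ereal (a n / n)) \<noteq> \<infinity>"
proof -
  obtain B where "\<forall>\<^sub>F m in sequentially. a m / m \<le> B" using ratio_bounded_above by blast
  then have "\<forall>\<^sub>F m in sequentially. ereal (a m / m) \<le> ereal B" by (simp add: eventually_mono)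
  then have "Limsup sequentially (\<lambda>n. ereal (a n / n)) \<le> ereal B" by (rule Limsup_bounded)
  then show ?thesis by auto
qed

lemma Limsup_ratio_le_Liminf:
  "Limsup sequentially (\<lambda>n. ereal (a n / n)) \<le> Liminf sequentially (\<lambda>n. ereal (a n / n))"
proof (cases "Limsup sequentially (\<lambda>n. ereal (a n / n))")
  case (real lam)
  have "ereal lam \<le> Liminf sequentially (\<lambda>n. ereal (a n / n))"
  proof (rule ereal_le_epsilon2)
    fix \<eta> :: real
    assume "0 < \<eta>"
    then have "\<forall>\<^sub>F k in sequentially. ereal (lam - \<eta>) \<le> ereal (a k / k)"
      using ratio_eventually_ge[OF real] by (simp add: eventually_mono)
    then have "ereal (lam - \<eta>) \<le> Liminf sequentially (\<lambda>n. ereal (a n / n))"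
      by (rule Liminf_bounded)
    then show "ereal lam \<le> Liminf sequentially (\<lambda>n. ereal (a n / n)) + ereal \<eta>"
      by (metis add_right_mono diff_add_cancel plus_ereal.simps(1))
  qed
  then show ?thesis using real by simp
qed (use Limsup_ratio_ne_top in simp_all)

end

theorem theorem4p4:
  fixes \<mu> :: real and N :: nat and f a :: "nat \<Rightarrow> real"
  assumes "\<mu> > 1" and "N \<ge> 1"
    and "\<And>n. n \<ge> 1 \<Longrightarrow> f n \<ge> 0"
    and "\<And>n m. 1 \<le> n \<Longrightarrow> n \<le> m \<Longrightarrow> f n \<le> f m"
    and "summable (\<lambda>n. f (Suc n) / (real (Suc n))^2)"
    and "\<And>n m. N \<le> n \<Longrightarrow> n \<le> m \<Longrightarrow> real m \<le> \<mu> * real n \<Longrightarrow>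
           a (n + m) \<le> a n + a m + f (n + m)"
  shows "\<exists>L::ereal. L \<noteq> \<infinity> \<and> ((\<lambda>n. ereal (a n / real n)) \<longlongrightarrow> L) sequentially"
proof -
  interpret near_subadditive f \<mu> N a
    by unfold_locales (use assms in auto)
  let ?X = "\<lambda>n. ereal (a n / real n)"
  have "Liminf sequentially ?X = Limsup sequentially ?X"
    using Limsup_ratio_le_Liminf Liminf_le_Limsup[of sequentially ?X] by simp
  then have "(?X \<longlongrightarrow> Limsup sequentially ?X) sequentially"
    by (intro Liminf_eq_Limsup) simp_all
  then show ?thesis using Limsup_ratio_ne_top by blast
qed

end
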